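(* Let $X$ be a finite set and let $c$ be a choice correspondence on $X$. Then $c$ admits a minimal compromise representation if and only if $c$ satisfies the following five conditions: Condition 1: for all $x,y\in X$ and menus $A\subset B$, if $x,y\in A$, $x\in c(A)$ and $y\in c(B)$, then $x\in c(B)$. Condition 2: for all $x,y\in X$ and menus $A\subset B$, if $x,y\in A$, $x\in r^{c}(A)$ and $y\in r^{c}(B)$, then $x\in r^{c}(B)$. Condition 3: for every menu $A$ with at least two elements there exists $x\in A$ with $x\notin c(A)$. Condition 4: for every menu $A$ and all $x,y\in X$, if $x\in A\setminus c(A)$ and $x\in c(A\cup\{y\})$, then $y\notin c(A\cup\{y\})$. Condition 5: for every menu $A$ and every menu $B\subseteq r^{c}(A)$ with at least two elements, there exists $x\in B$ with $x\notin c(B)$ such that $B=c(B)\cup\{x\}$.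
   Context: A menu is a nonempty subset of $X$. A choice correspondence is a map $c$ assigning to each menu $A$ a nonempty subset $c(A)\subseteq A$. A weak order is a complete and transitive binary relation on $X$; a linear order is an antisymmetric weak order. For a weak order $R$ and menu $A$, $\max(A,R)=\{x\in A: xRy \text{ for all } y\in A\}$. For a linear order $L$, $\min(A,L)$ denotes the unique $x\in A$ with $yLx$ for all $y\in A$. A choice correspondence $c$ admits a minimal compromise representation if there exist a weak order $R$ and a linear order $L$ on $X$ such that for every menu $A$: $c(A)=\max(A,R)$ if $\max(A,R)$ is a singleton, and $c(A)=\max(A,R)\setminus\{\min(\max(A,R),L)\}$ otherwise. For a choice correspondence $c$ and menu $A$, $r^{c}(A)=\{x\in A: c(A\setminus\{x\})\neq c(A)\}$, the set of alternatives whose removal changes the choice (with the convention that for a singleton $A=\{x\}$ the removal of $x$ counts as changing the choice, so $r^c(\{x\})=\{x\}$; in particular $c(A)\subseteq r^c(A)$ always). *)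

theory Defs
  imports Main
begin

definition menu :: "'a set \<Rightarrow> 'a set \<Rightarrow> bool" where
  "menu X A \<longleftrightarrow> A \<subseteq> X \<and> A \<noteq> {}"

definition choice_corr :: "'a set \<Rightarrow> ('a set \<Rightarrow> 'a set) \<Rightarrow> bool" where
  "choice_corr X c \<longleftrightarrow> (\<forall>A. menu X A \<longrightarrow> c A \<subseteq> A \<and> c A \<noteq> {})"

definition weak_order_on :: "'a set \<Rightarrow> 'a rel \<Rightarrow> bool" where
  "weak_order_on X R \<longleftrightarrow> preorder_on X R \<and> total_on X R"

definition lin_order_on :: "'a set \<Rightarrow> 'a rel \<Rightarrow> bool" where
  "lin_order_on X L \<longleftrightarrow> weak_order_on X L \<and> antisym L"

definition maxR :: "'a set \<Rightarrow> 'a rel \<Rightarrow> 'a set" where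
  "maxR A R = {x \<in> A. \<forall>y \<in> A. (x, y) \<in> R}"

definition minL :: "'a set \<Rightarrow> 'a rel \<Rightarrow> 'a" where
  "minL A L = (THE x. x \<in> A \<and> (\<forall>y \<in> A. (y, x) \<in> L))"

definition min_compromise_rep :: "'a set \<Rightarrow> ('a set \<Rightarrow> 'a set) \<Rightarrow> bool" where
  "min_compromise_rep X c \<longleftrightarrow>
     (\<exists>R L. weak_order_on X R \<and> lin_order_on X L \<and>
        (\<forall>A. menu X A \<longrightarrow>
           c A = (if (\<exists>x. maxR A R = {x}) then maxR A R
                  else maxR A R - {minL (maxR A R) L})))"

(* r^c(A); for a singleton menu the removal counts as changing the choice *)
definition rc :: "('a set \<Rightarrow> 'a set) \<Rightarrow> 'a set \<Rightarrow> 'a set" where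
  "rc c A = {x \<in> A. A - {x} = {} \<or> c (A - {x}) \<noteq> c A}"

end

theory Submission
  imports Defs
begin

text \<open>
  Necessity: under a representation (R, L), both c A and r^c A depend only on the top class
  M = max(A, R). If |M| >= 2 then c A is M without its L-least element; r^c A equals c A when
  |M| <= 2 (removing the loser of a pair leaves the same singleton choice) and equals M when
  |M| >= 3 (removing the loser exposes a new one). Since the top class of a submenu meeting M is
  M restricted to it, each condition becomes a statement about nested top classes.

  Sufficiency: recover L from binary choices (x L y iff x is chosen from {x, y}) and R from
  removals (x R y iff x is in r^c B for some menu B containing y). Nested WARP for c together with
  condition 3 makes L a linear order, and nested WARP for r^c makes R transitive. The top class M
  of a menu A is contained in r^c D for a single menu D, so by condition 5 c M drops exactly one
  element of M, necessarily its L-least one; nested WARP for c and for r^c, with condition 3,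
  carry this over to c A.
\<close>

lemma weak_order_on_converse [simp]: "weak_order_on X (R\<inverse>) \<longleftrightarrow> weak_order_on X R"
  by (auto simp: weak_order_on_def total_on_def)

lemma weak_order_on_maxR_nonempty:
  assumes "weak_order_on X R" "finite A" "A \<noteq> {}" "A \<subseteq> X"
  shows "maxR A R \<noteq> {}"
proof -
  let ?beats = "\<lambda>y x. (y, x) \<in> R \<and> (x, y) \<notin> R"
  have R: "refl_on X R" "total_on X R" "trans R"
    using assms(1) by (auto simp: weak_order_on_def preorder_on_def)
  then have "asymp_on A ?beats" "transp_on A ?beats"
    by (auto simp: asymp_on_def transp_on_def dest: transD)
  then obtain m where m: "m \<in> A" "\<forall>y\<in>A. y \<noteq> m \<longrightarrow> \<not> ?beats y m"
    using Finite_Set.bex_min_element[OF assms(2) _ _ assms(3)] by blast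
  have "(m, y) \<in> R" if "y \<in> A" for y
  proof (cases "y = m")
    case True
    then show ?thesis using R(1) m(1) assms(4) by (auto simp: refl_on_def)
  next
    case False
    then show ?thesis using R(2) m that assms(4) by (auto simp: total_on_def)
  qed
  then have "m \<in> maxR A R" using m(1) by (simp add: maxR_def)
  then show ?thesis by blast
qed

lemma minL_eq:
  assumes "antisym L" "x \<in> S" "\<forall>y\<in>S. (y, x) \<in> L"
  shows "minL S L = x"
  unfolding minL_def using assms by (blast dest: antisymD)

lemma lin_order_on_minL:
  assumes "lin_order_on X L" "finite S" "S \<noteq> {}" "S \<subseteq> X"
  shows "minL S L \<in> S" "\<forall>y\<in>S. (y, minL S L) \<in> L"
proof -
  have "weak_order_on X (L\<inverse>)" "antisym L"
    using assms(1) by (auto simp: lin_order_on_def)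
  then obtain x where "x \<in> maxR S (L\<inverse>)"
    using weak_order_on_maxR_nonempty assms(2-4) by blast
  then have "x \<in> S" "\<forall>y\<in>S. (y, x) \<in> L"
    by (auto simp: maxR_def)
  with minL_eq[OF \<open>antisym L\<close>] show "minL S L \<in> S" "\<forall>y\<in>S. (y, minL S L) \<in> L"
    by simp_all
qed

lemma maxR_subset: "maxR A R \<subseteq> A"
  by (auto simp: maxR_def)

lemma maxR_restrict:
  assumes "trans R" "A \<subseteq> B" "y \<in> A" "y \<in> maxR B R"
  shows "maxR A R = maxR B R \<inter> A"
  using assms by (auto simp: maxR_def dest: transD)

lemma maxR_of_subset_maxR: "B \<subseteq> maxR A R \<Longrightarrow> maxR B R = B"
  by (auto simp: maxR_def)

lemma minL_subset:
  assumes "lin_order_on X L" "finite T" "T \<subseteq> X" "S \<subseteq> T" "minL T L \<in> S"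
  shows "minL S L = minL T L"
proof (rule minL_eq)
  show "antisym L" using assms(1) by (simp add: lin_order_on_def)
  have "T \<noteq> {}" using assms(4,5) by blast
  then have "\<forall>y\<in>T. (y, minL T L) \<in> L"
    using lin_order_on_minL(2)[OF assms(1,2) _ assms(3)] by blast
  then show "\<forall>y\<in>S. (y, minL T L) \<in> L" using assms(4) by blast
qed (fact assms(5))

lemma two_le_card: "finite S \<Longrightarrow> x \<in> S \<Longrightarrow> y \<in> S \<Longrightarrow> x \<noteq> y \<Longrightarrow> 2 \<le> card S"
  using card_mono[of S "{x, y}"] by simp

lemma menu_finite: "finite X \<Longrightarrow> menu X A \<Longrightarrow> finite A"
  by (auto simp: menu_def intro: finite_subset)

lemma rc_subset: "rc c A \<subseteq> A"
  by (auto simp: rc_def)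

lemma rc_singleton: "rc c {x} = {x}"
  by (auto simp: rc_def)

lemma choice_subset_rc:
  assumes "choice_corr X c" "menu X A"
  shows "c A \<subseteq> rc c A"
proof
  fix x assume x: "x \<in> c A"
  then have "x \<in> A" using assms by (auto simp: choice_corr_def)
  moreover have "c (A - {x}) \<noteq> c A" if "A - {x} \<noteq> {}"
  proof -
    have "menu X (A - {x})" using assms(2) that by (auto simp: menu_def)
    then have "x \<notin> c (A - {x})" using assms(1) by (auto simp: choice_corr_def)
    then show ?thesis using x by blast
  qed
  ultimately show "x \<in> rc c A" by (auto simp: rc_def)
qed

lemma rc_nonempty: "choice_corr X c \<Longrightarrow> menu X A \<Longrightarrow> rc c A \<noteq> {}"
  using choice_subset_rc[of X c A] by (auto simp: choice_corr_def)

text \<open>Conditions 1 and 2 are nested_warp X c and nested_warp X (rc c); conditions 3, 4 and 5 are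
  rejects_some, promoter_not_chosen and rejects_one_within_rc.\<close>

definition nested_warp :: "'a set \<Rightarrow> ('a set \<Rightarrow> 'a set) \<Rightarrow> bool" where
  "nested_warp X f \<longleftrightarrow> (\<forall>x y A B. menu X A \<and> menu X B \<and> A \<subset> B \<and> x \<in> A \<and> y \<in> A
        \<and> x \<in> f A \<and> y \<in> f B \<longrightarrow> x \<in> f B)"

definition rejects_some :: "'a set \<Rightarrow> ('a set \<Rightarrow> 'a set) \<Rightarrow> bool" where
  "rejects_some X c \<longleftrightarrow> (\<forall>A. menu X A \<and> card A \<ge> 2 \<longrightarrow> (\<exists>x \<in> A. x \<notin> c A))"

definition promoter_not_chosen :: "'a set \<Rightarrow> ('a set \<Rightarrow> 'a set) \<Rightarrow> bool" where
  "promoter_not_chosen X c \<longleftrightarrow> (\<forall>A x y. menu X A \<and> x \<in> X \<and> y \<in> X \<and> x \<in> A - c A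
        \<and> x \<in> c (A \<union> {y}) \<longrightarrow> y \<notin> c (A \<union> {y}))"

definition rejects_one_within_rc :: "'a set \<Rightarrow> ('a set \<Rightarrow> 'a set) \<Rightarrow> bool" where
  "rejects_one_within_rc X c \<longleftrightarrow> (\<forall>A B. menu X A \<and> menu X B \<and> B \<subseteq> rc c A \<and> card B \<ge> 2
        \<longrightarrow> (\<exists>x \<in> B. x \<notin> c B \<and> B = c B \<union> {x}))"

lemma nested_warpD:
  "nested_warp X f \<Longrightarrow> menu X A \<Longrightarrow> menu X B \<Longrightarrow> A \<subset> B \<Longrightarrow> x \<in> A \<Longrightarrow> y \<in> A
    \<Longrightarrow> x \<in> f A \<Longrightarrow> y \<in> f B \<Longrightarrow> x \<in> f B"
  unfolding nested_warp_def by blast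

lemma rejects_someD: "rejects_some X c \<Longrightarrow> menu X A \<Longrightarrow> 2 \<le> card A \<Longrightarrow> \<exists>x \<in> A. x \<notin> c A"
  unfolding rejects_some_def by blast

lemma rejects_one_within_rcD:
  "rejects_one_within_rc X c \<Longrightarrow> menu X A \<Longrightarrow> menu X B \<Longrightarrow> B \<subseteq> rc c A \<Longrightarrow> 2 \<le> card B
    \<Longrightarrow> \<exists>x \<in> B. x \<notin> c B \<and> B = c B \<union> {x}"
  unfolding rejects_one_within_rc_def by blast

section \<open>Necessity\<close>

locale minimal_compromise =
  fixes X :: "'a set" and c :: "'a set \<Rightarrow> 'a set" and R L :: "'a rel"
  assumes finite_X: "finite X" and choice: "choice_corr X c"
    and weak_R: "weak_order_on X R" and lin_L: "lin_order_on X L"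
    and rep: "\<And>A. menu X A \<Longrightarrow> c A = (if \<exists>x. maxR A R = {x} then maxR A R
                  else maxR A R - {minL (maxR A R) L})"
begin

lemma trans_R: "trans R"
  using weak_R by (simp add: weak_order_on_def preorder_on_def)

lemma menu_maxR:
  assumes "menu X A"
  shows "maxR A R \<noteq> {}" "finite (maxR A R)" "maxR A R \<subseteq> X"
proof -
  have A: "finite A" "A \<noteq> {}" "A \<subseteq> X"
    using assms menu_finite[OF finite_X] by (auto simp: menu_def)
  then show "maxR A R \<noteq> {}" by (rule weak_order_on_maxR_nonempty[OF weak_R])
  show "finite (maxR A R)" "maxR A R \<subseteq> X"
    using A maxR_subset[of A R] finite_subset by blast+
qed

lemma minL_maxR:
  assumes "menu X A"
  shows "minL (maxR A R) L \<in> maxR A R" "\<forall>y\<in>maxR A R. (y, minL (maxR A R) L) \<in> L"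
  using lin_order_on_minL[OF lin_L menu_maxR(2,1,3)[OF assms]] by blast+

lemma choice_subset_maxR: "menu X A \<Longrightarrow> c A \<subseteq> maxR A R"
  using rep by auto

lemma choice_if_card_le1:
  assumes "menu X A" "card (maxR A R) \<le> 1"
  shows "c A = maxR A R"
proof -
  have "card (maxR A R) = 1"
    using assms menu_maxR by (simp add: le_Suc_eq)
  then obtain x where "maxR A R = {x}"
    by (auto simp: card_1_singleton_iff)
  then show ?thesis using rep[OF assms(1)] by simp
qed

lemma choice_if_card_ge2:
  assumes "menu X A" "2 \<le> card (maxR A R)"
  shows "c A = maxR A R - {minL (maxR A R) L}"
proof -
  have "\<nexists>x. maxR A R = {x}" using assms(2) by auto
  then show ?thesis using rep[OF assms(1)] by simp
qed

lemma choice_cong_maxR: "menu X A \<Longrightarrow> menu X B \<Longrightarrow> maxR A R = maxR B R \<Longrightarrow> c A = c B"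
  using rep[of A] rep[of B] by simp

lemma rejected_in_maxR:
  assumes "menu X A" "x \<in> maxR A R" "x \<notin> c A"
  shows "2 \<le> card (maxR A R)" "x = minL (maxR A R) L"
proof -
  show two: "2 \<le> card (maxR A R)"
  proof (rule ccontr)
    assume "\<not> 2 \<le> card (maxR A R)"
    then have "c A = maxR A R" using choice_if_card_le1[OF assms(1)] by simp
    then show False using assms(2,3) by blast
  qed
  show "x = minL (maxR A R) L"
    using choice_if_card_ge2[OF assms(1) two] assms(2,3) by blast
qed

lemma maxR_remove:
  assumes "menu X A" "maxR A R \<noteq> {x}"
  shows "menu X (A - {x})" "maxR (A - {x}) R = maxR A R - {x}"
proof -
  obtain w where w: "w \<in> maxR A R" "w \<noteq> x"
    using assms menu_maxR(1) by blast
  then have "w \<in> A - {x}" using maxR_subset[of A R] by blast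
  then show "menu X (A - {x})" using assms(1) by (auto simp: menu_def)
  have "maxR (A - {x}) R = maxR A R \<inter> (A - {x})"
    using maxR_restrict[OF trans_R Diff_subset \<open>w \<in> A - {x}\<close> w(1)] .
  then show "maxR (A - {x}) R = maxR A R - {x}"
    using maxR_subset[of A R] by blast
qed

lemma rc_subset_maxR:
  assumes "menu X A"
  shows "rc c A \<subseteq> maxR A R"
proof
  fix x assume x: "x \<in> rc c A"
  show "x \<in> maxR A R"
  proof (rule ccontr)
    assume "x \<notin> maxR A R"
    then have "maxR A R \<noteq> {x}" by blast
    note removed = maxR_remove[OF assms this]
    have "maxR (A - {x}) R = maxR A R"
      using removed(2) \<open>x \<notin> maxR A R\<close> by simp
    then have "c (A - {x}) = c A"
      using choice_cong_maxR[OF removed(1) assms] by blast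
    moreover have "A - {x} \<noteq> {}" using removed(1) by (simp add: menu_def)
    ultimately show False using x by (simp add: rc_def)
  qed
qed

lemma rc_eq_choice:
  assumes "menu X A" "card (maxR A R) \<le> 2"
  shows "rc c A = c A"
proof
  show "c A \<subseteq> rc c A" by (rule choice_subset_rc[OF choice assms(1)])
  show "rc c A \<subseteq> c A"
  proof
    fix x assume x: "x \<in> rc c A"
    show "x \<in> c A"
    proof (rule ccontr)
      assume rejected: "x \<notin> c A"
      have "x \<in> maxR A R" using x rc_subset_maxR[OF assms(1)] by blast
      note best = rejected_in_maxR[OF assms(1) this rejected]
      then have cA: "c A = maxR A R - {x}"
        using choice_if_card_ge2[OF assms(1)] by simp
      have "maxR A R \<noteq> {x}" using best(1) by auto
      note removed = maxR_remove[OF assms(1) this]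
      have "card (maxR A R - {x}) \<le> 1"
        using assms(2) \<open>x \<in> maxR A R\<close> menu_maxR(2)[OF assms(1)] by simp
      then have "c (A - {x}) = c A"
        using choice_if_card_le1[OF removed(1)] removed(2) cA by simp
      moreover have "A - {x} \<noteq> {}" using removed(1) by (simp add: menu_def)
      ultimately show False using x by (simp add: rc_def)
    qed
  qed
qed

lemma rc_eq_maxR:
  assumes "menu X A" "3 \<le> card (maxR A R)"
  shows "rc c A = maxR A R"
proof
  show "rc c A \<subseteq> maxR A R" by (rule rc_subset_maxR[OF assms(1)])
  show "maxR A R \<subseteq> rc c A"
  proof
    fix x assume x: "x \<in> maxR A R"
    show "x \<in> rc c A"
    proof (cases "x \<in> c A")
      case True
      then show ?thesis using choice_subset_rc[OF choice assms(1)] by blast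
    next
      case False
      then have "x = minL (maxR A R) L" using rejected_in_maxR[OF assms(1) x] by blast
      then have cA: "c A = maxR A R - {x}"
        using choice_if_card_ge2[OF assms(1)] assms(2) by simp
      have "maxR A R \<noteq> {x}" using assms(2) by auto
      note removed = maxR_remove[OF assms(1) this]
      have "2 \<le> card (maxR (A - {x}) R)"
        using removed(2) assms(2) x menu_maxR(2)[OF assms(1)] by simp
      then have "c (A - {x}) \<noteq> c A"
        using choice_if_card_ge2[OF removed(1)] minL_maxR(1)[OF removed(1)] removed(2) cA
        by blast
      then show ?thesis using x maxR_subset[of A R] by (auto simp: rc_def)
    qed
  qed
qed

lemma card_choice_le1:
  assumes "menu X A" "card (maxR A R) \<le> 2"
  shows "card (c A) \<le> 1"
proof (cases "card (maxR A R) \<le> 1")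
  case True
  then show ?thesis using choice_if_card_le1[OF assms(1)] by simp
next
  case False
  then have "c A = maxR A R - {minL (maxR A R) L}"
    using choice_if_card_ge2[OF assms(1)] by simp
  then show ?thesis
    using assms(2) minL_maxR(1)[OF assms(1)] menu_maxR(2)[OF assms(1)] by simp
qed

lemma nested_warp_choice: "nested_warp X c"
  unfolding nested_warp_def
proof (intro allI impI, elim conjE)
  fix x y A B
  assume A: "menu X A" and B: "menu X B" and "A \<subset> B" "x \<in> A" "y \<in> A"
    and x: "x \<in> c A" and y: "y \<in> c B"
  show "x \<in> c B"
  proof (rule ccontr)
    assume rejected: "x \<notin> c B"
    have "y \<in> maxR B R" using y choice_subset_maxR[OF B] by blast
    then have restrict: "maxR A R = maxR B R \<inter> A"
      using maxR_restrict[OF trans_R psubset_imp_subset] \<open>A \<subset> B\<close> \<open>y \<in> A\<close> by simp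
    have "x \<in> maxR A R" using x choice_subset_maxR[OF A] by blast
    then have "x \<in> maxR B R" using restrict by blast
    then have x_min: "x = minL (maxR B R) L" using rejected_in_maxR(2)[OF B _ rejected] by simp
    have "y \<in> maxR A R" "x \<noteq> y"
      using restrict \<open>y \<in> maxR B R\<close> \<open>y \<in> A\<close> y rejected by auto
    then have "2 \<le> card (maxR A R)"
      by (rule two_le_card[OF menu_maxR(2)[OF A] \<open>x \<in> maxR A R\<close>])
    moreover have "minL (maxR A R) L = x"
    proof -
      have "maxR A R \<subseteq> maxR B R" using restrict by blast
      with x_min \<open>x \<in> maxR A R\<close> show ?thesis
        using minL_subset[OF lin_L menu_maxR(2,3)[OF B]] by simp
    qed
    ultimately show False using choice_if_card_ge2[OF A] x by simp
  qed
qed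

lemma nested_warp_rc: "nested_warp X (rc c)"
  unfolding nested_warp_def
proof (intro allI impI, elim conjE)
  fix x y A B
  assume A: "menu X A" and B: "menu X B" and "A \<subset> B" "x \<in> A" "y \<in> A"
    and x: "x \<in> rc c A" and y: "y \<in> rc c B"
  have "y \<in> maxR B R" using y rc_subset_maxR[OF B] by blast
  then have restrict: "maxR A R = maxR B R \<inter> A"
    using maxR_restrict[OF trans_R psubset_imp_subset] \<open>A \<subset> B\<close> \<open>y \<in> A\<close> by simp
  show "x \<in> rc c B"
  proof (cases "3 \<le> card (maxR B R)")
    case True
    then show ?thesis using rc_eq_maxR[OF B] rc_subset_maxR[OF A] restrict x by blast
  next
    case False
    have "card (maxR A R) \<le> card (maxR B R)"
      using restrict menu_maxR(2)[OF B] by (simp add: card_mono)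
    then have "rc c A = c A" "rc c B = c B"
      using rc_eq_choice[OF A] rc_eq_choice[OF B] False by simp_all
    then show ?thesis
      using nested_warpD[OF nested_warp_choice A B \<open>A \<subset> B\<close> \<open>x \<in> A\<close> \<open>y \<in> A\<close>] x y
      by simp
  qed
qed

lemma rejects_some_choice: "rejects_some X c"
  unfolding rejects_some_def
proof (intro allI impI, elim conjE)
  fix A assume A: "menu X A" and "2 \<le> card A"
  have "c A \<noteq> A"
  proof (cases "card (maxR A R) \<le> 1")
    case True
    then show ?thesis
      using choice_if_card_le1[OF A] \<open>2 \<le> card A\<close> by auto
  next
    case False
    then show ?thesis
      using choice_if_card_ge2[OF A] minL_maxR(1)[OF A] maxR_subset[of A R] by auto
  qed
  then show "\<exists>x\<in>A. x \<notin> c A" using choice_subset_maxR[OF A] maxR_subset[of A R] by blast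
qed

lemma promoter_not_chosen_choice: "promoter_not_chosen X c"
  unfolding promoter_not_chosen_def
proof (intro allI impI notI, elim conjE)
  fix A x y
  assume A: "menu X A" and "y \<in> X" and x: "x \<in> A - c A" "x \<in> c (A \<union> {y})"
    and y: "y \<in> c (A \<union> {y})"
  let ?B = "A \<union> {y}"
  have B: "menu X ?B" using A \<open>y \<in> X\<close> by (auto simp: menu_def)
  have "y \<notin> A" using x by (auto simp: insert_absorb)
  have xy: "x \<in> maxR ?B R" "y \<in> maxR ?B R" using x(2) y choice_subset_maxR[OF B] by auto
  have "x \<in> A" using x(1) by blast
  then have restrict: "maxR A R = maxR ?B R \<inter> A"
    using maxR_restrict[OF trans_R Un_upper1 _ xy(1)] by simp
  then have "x \<in> maxR A R" using xy(1) \<open>x \<in> A\<close> by blast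
  moreover have "x \<notin> c A" using x(1) by blast
  ultimately have x_min: "x = minL (maxR A R) L" by (rule rejected_in_maxR(2)[OF A])
  let ?m = "minL (maxR ?B R) L"
  have "x \<noteq> y" using \<open>x \<in> A\<close> \<open>y \<notin> A\<close> by blast
  then have "2 \<le> card (maxR ?B R)" by (rule two_le_card[OF menu_maxR(2)[OF B] xy])
  then have cB: "c ?B = maxR ?B R - {?m}" by (rule choice_if_card_ge2[OF B])
  then have "?m \<notin> c ?B" by blast
  then have "?m \<noteq> y" "?m \<noteq> x" using x(2) y by auto
  moreover have "?m \<in> maxR ?B R" by (rule minL_maxR(1)[OF B])
  ultimately have m: "?m \<in> maxR A R" using restrict maxR_subset[of ?B R] by blast
  have "maxR A R \<subseteq> maxR ?B R" using restrict by blast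
  then have "minL (maxR A R) L = ?m" by (rule minL_subset[OF lin_L menu_maxR(2,3)[OF B] _ m])
  then show False using x_min \<open>?m \<noteq> x\<close> by simp
qed

lemma rejects_one_within_rc_choice: "rejects_one_within_rc X c"
  unfolding rejects_one_within_rc_def
proof (intro allI impI, elim conjE)
  fix A B assume A: "menu X A" and B: "menu X B" and "B \<subseteq> rc c A" "2 \<le> card B"
  show "\<exists>x\<in>B. x \<notin> c B \<and> B = c B \<union> {x}"
  proof (cases "3 \<le> card (maxR A R)")
    case True
    then have "maxR B R = B"
      using rc_eq_maxR[OF A] \<open>B \<subseteq> rc c A\<close> maxR_of_subset_maxR by simp
    then have "c B = B - {minL B L}" "minL B L \<in> B"
      using choice_if_card_ge2[OF B] minL_maxR(1)[OF B] \<open>2 \<le> card B\<close> by simp_all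
    then show ?thesis by blast
  next
    case False
    then have "card B \<le> card (c A)"
      using rc_eq_choice[OF A] \<open>B \<subseteq> rc c A\<close> menu_maxR(2)[OF A] choice_subset_maxR[OF A]
      by (simp add: card_mono finite_subset)
    then show ?thesis using card_choice_le1[OF A] False \<open>2 \<le> card B\<close> by simp
  qed
qed

end

lemma min_compromise_rep_conditions:
  assumes "finite X" "choice_corr X c" "min_compromise_rep X c"
  shows "nested_warp X c \<and> nested_warp X (rc c) \<and> rejects_some X c
    \<and> promoter_not_chosen X c \<and> rejects_one_within_rc X c"
proof -
  obtain R L where "weak_order_on X R" "lin_order_on X L"
    "\<forall>A. menu X A \<longrightarrow> c A = (if \<exists>x. maxR A R = {x} then maxR A R
                  else maxR A R - {minL (maxR A R) L})"
    using assms(3) unfolding min_compromise_rep_def by blast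
  with assms(1,2) interpret minimal_compromise X c R L
    by unfold_locales blast+
  show ?thesis
    using nested_warp_choice nested_warp_rc rejects_some_choice promoter_not_chosen_choice
      rejects_one_within_rc_choice by blast
qed

section \<open>Sufficiency\<close>

text \<open>Condition 4 is not assumed: the other four already yield a representation.\<close>

locale compromise_conditions =
  fixes X :: "'a set" and c :: "'a set \<Rightarrow> 'a set"
  assumes finite_X: "finite X" and choice: "choice_corr X c"
    and warp_c: "nested_warp X c" and warp_rc: "nested_warp X (rc c)"
    and rejects: "rejects_some X c" and rejects_one: "rejects_one_within_rc X c"
begin

lemma choice_subset: "menu X A \<Longrightarrow> c A \<subseteq> A"
  using choice by (simp add: choice_corr_def)

lemma choice_nonempty: "menu X A \<Longrightarrow> c A \<noteq> {}"
  using choice by (simp add: choice_corr_def)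

lemma choice_singleton: "x \<in> X \<Longrightarrow> c {x} = {x}"
  using choice_subset[of "{x}"] choice_nonempty[of "{x}"] by (auto simp: menu_def)

lemma choice_pair:
  assumes "x \<in> X" "y \<in> X" "x \<noteq> y"
  shows "c {x, y} = {x} \<or> c {x, y} = {y}"
proof -
  have pair: "menu X {x, y}" using assms by (simp add: menu_def)
  moreover have "card {x, y} = 2" using assms(3) by simp
  ultimately obtain z where "z \<in> {x, y}" "z \<notin> c {x, y}"
    using rejects_someD[OF rejects] by (metis order_refl)
  then show ?thesis
    using choice_subset[OF pair] choice_nonempty[OF pair] by blast
qed

definition Lc :: "'a rel" where
  "Lc = {(x, y). x \<in> X \<and> y \<in> X \<and> x \<in> c {x, y}}"

lemma Lc_total: "x \<in> X \<Longrightarrow> y \<in> X \<Longrightarrow> (x, y) \<in> Lc \<or> (y, x) \<in> Lc"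
  using choice_subset[of "{x, y}"] choice_nonempty[of "{x, y}"]
  by (auto simp: Lc_def menu_def insert_commute)

lemma Lc_antisym: "(x, y) \<in> Lc \<Longrightarrow> (y, x) \<in> Lc \<Longrightarrow> x = y"
  using choice_pair[of x y] by (fastforce simp: Lc_def insert_commute)

lemma choice_closed_Lc:
  assumes "menu X B" "y \<in> c B" "z \<in> B" "(z, y) \<in> Lc"
  shows "z \<in> c B"
proof -
  have pair: "menu X {z, y}" and z: "z \<in> c {z, y}"
    using assms(4) by (auto simp: Lc_def menu_def)
  have "{z, y} \<subseteq> B" using assms(2,3) choice_subset[OF assms(1)] by blast
  then consider "B = {z, y}" | "{z, y} \<subset> B" by blast
  then show ?thesis
  proof cases
    case 1
    then show ?thesis using z by simp
  next
    case 2
    then show ?thesis using nested_warpD[OF warp_c pair assms(1) 2 _ _ z assms(2)] by simp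
  qed
qed

lemma Lc_trans:
  assumes xy: "(x, y) \<in> Lc" and yz: "(y, z) \<in> Lc"
  shows "(x, z) \<in> Lc"
proof (rule ccontr)
  assume xz: "(x, z) \<notin> Lc"
  have X: "x \<in> X" "y \<in> X" "z \<in> X" using xy yz by (auto simp: Lc_def)
  then have zx: "(z, x) \<in> Lc" using xz Lc_total by blast
  have "x \<noteq> y" "y \<noteq> z" "x \<noteq> z"
    using xy yz xz zx Lc_antisym by auto
  define T where "T = {x, y, z}"
  have T: "menu X T" using X by (simp add: T_def menu_def)
  have "c T = T"
  proof
    show "c T \<subseteq> T" by (rule choice_subset[OF T])
    have cycle: "y \<in> c T \<Longrightarrow> x \<in> c T" "z \<in> c T \<Longrightarrow> y \<in> c T" "x \<in> c T \<Longrightarrow> z \<in> c T"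
      using choice_closed_Lc[OF T] xy yz zx by (simp_all add: T_def)
    obtain w where "w \<in> c T" using choice_nonempty[OF T] by blast
    then have "w \<in> T" using choice_subset[OF T] by blast
    with \<open>w \<in> c T\<close> show "T \<subseteq> c T"
      using cycle by (auto simp: T_def)
  qed
  moreover have "card T = 3" using \<open>x \<noteq> y\<close> \<open>y \<noteq> z\<close> \<open>x \<noteq> z\<close> by (simp add: T_def)
  ultimately show False using rejects_someD[OF rejects T] by auto
qed

lemma lin_order_on_Lc: "lin_order_on X Lc"
  unfolding lin_order_on_def weak_order_on_def preorder_on_def
proof (intro conjI)
  show "Lc \<subseteq> X \<times> X" by (auto simp: Lc_def)
  show "refl_on X Lc" using choice_singleton by (simp add: refl_on_def Lc_def)
  show "trans Lc" using Lc_trans by (blast intro: transI)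
  show "total_on X Lc" using Lc_total by (simp add: total_on_def)
  show "antisym Lc" using Lc_antisym by (blast intro: antisymI)
qed

lemma rc_mono:
  assumes "menu X A" "menu X D" "A \<subseteq> D" "a \<in> A" "a \<in> rc c D"
  shows "rc c A \<subseteq> rc c D"
proof (cases "A = D")
  case False
  then have "A \<subset> D" using assms(3) by blast
  with assms show ?thesis
    using nested_warpD[OF warp_rc] rc_subset[of c A] by blast
qed simp

definition Rc :: "'a rel" where
  "Rc = {(x, y). x \<in> X \<and> y \<in> X \<and> (\<exists>B. menu X B \<and> y \<in> B \<and> x \<in> rc c B)}"

lemma Rc_intro: "menu X B \<Longrightarrow> y \<in> B \<Longrightarrow> x \<in> rc c B \<Longrightarrow> (x, y) \<in> Rc"
  using rc_subset[of c B] by (auto simp: Rc_def menu_def)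

lemma Rc_trans:
  assumes "(x, y) \<in> Rc" "(y, z) \<in> Rc"
  shows "(x, z) \<in> Rc"
proof -
  obtain A where A: "menu X A" "y \<in> A" "x \<in> rc c A" using assms(1) by (auto simp: Rc_def)
  obtain B where B: "menu X B" "z \<in> B" "y \<in> rc c B" using assms(2) by (auto simp: Rc_def)
  define D where "D = A \<union> B"
  have D: "menu X D" using A(1) B(1) by (auto simp: D_def menu_def)
  obtain r where r: "r \<in> rc c D" using rc_nonempty[OF choice D] by blast
  have "x \<in> rc c D"
  proof (cases "r \<in> A")
    case True
    then show ?thesis using rc_mono[OF A(1) D _ True r] A(3) by (auto simp: D_def)
  next
    case False
    then have "r \<in> B" using r rc_subset[of c D] by (auto simp: D_def)
    then have "y \<in> rc c D" using rc_mono[OF B(1) D _ _ r] B(3) by (auto simp: D_def)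
    then show ?thesis using rc_mono[OF A(1) D _ A(2)] A(3) by (auto simp: D_def)
  qed
  then show ?thesis using Rc_intro[OF D] B(2) by (simp add: D_def)
qed

lemma weak_order_on_Rc: "weak_order_on X Rc"
  unfolding weak_order_on_def preorder_on_def
proof (intro conjI)
  show "Rc \<subseteq> X \<times> X" by (auto simp: Rc_def)
  show "refl_on X Rc"
    unfolding refl_on_def using Rc_intro[of "{_}"] by (simp add: menu_def rc_singleton)
  show "trans Rc" using Rc_trans by (blast intro: transI)
  show "total_on X Rc"
  proof (unfold total_on_def, intro ballI impI)
    fix x y assume "x \<in> X" "y \<in> X" "x \<noteq> y"
    then have pair: "menu X {x, y}" by (simp add: menu_def)
    have "c {x, y} \<subseteq> rc c {x, y}" by (rule choice_subset_rc[OF choice pair])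
    then have "x \<in> rc c {x, y} \<or> y \<in> rc c {x, y}"
      using choice_pair[OF \<open>x \<in> X\<close> \<open>y \<in> X\<close> \<open>x \<noteq> y\<close>] by blast
    then show "(x, y) \<in> Rc \<or> (y, x) \<in> Rc" using Rc_intro[OF pair] by blast
  qed
qed

lemma rc_rejects_if_two_chosen:
  "menu X D \<Longrightarrow> 2 \<le> card (c D) \<Longrightarrow> \<exists>d\<in>rc c D. d \<notin> c D"
proof (induction "card D" arbitrary: D rule: less_induct)
  case less
  note D = less.prems(1)
  have "finite D" by (rule menu_finite[OF finite_X D])
  then have "2 \<le> card D"
    using less.prems(2) card_mono[OF _ choice_subset[OF D]] by simp
  then obtain e where e: "e \<in> D" "e \<notin> c D" using rejects_someD[OF rejects D] by blast
  have sub: "c D \<subseteq> D - {e}" using choice_subset[OF D] e(2) by blast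
  then have D': "menu X (D - {e})" using D choice_nonempty[OF D] by (auto simp: menu_def)
  show ?case
  proof (cases "c (D - {e}) = c D")
    case False
    then show ?thesis using e by (auto simp: rc_def)
  next
    case True
    have "card (D - {e}) < card D" using \<open>finite D\<close> e(1) by (rule card_Diff1_less)
    then obtain d where d: "d \<in> rc c (D - {e})" "d \<notin> c D"
      using less.hyps[OF _ D'] less.prems(2) True by auto
    obtain y where y: "y \<in> c D" using choice_nonempty[OF D] by blast
    have "D - {e} \<subset> D" using e(1) by blast
    moreover have "y \<in> rc c D" using y choice_subset_rc[OF choice D] by blast
    ultimately have "d \<in> rc c D"
      using nested_warpD[OF warp_rc D' D] d(1) rc_subset[of c "D - {e}"] y sub by blast
    then show ?thesis using d(2) by blast
  qed
qed

lemma menu_covering_rc: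
  assumes "W \<subseteq> X" "W \<noteq> {}" "\<forall>x\<in>W. \<forall>y\<in>W. (x, y) \<in> Rc"
  shows "\<exists>D. menu X D \<and> W \<subseteq> rc c D"
proof -
  txt \<open>Any element of rc c D lies in one of the witnessing menus, and nested WARP for rc then
    pulls the removal sets of all witnessing menus into rc c D.\<close>
  define D where "D = \<Union>{B. menu X B \<and> (\<exists>x\<in>W. \<exists>y\<in>W. y \<in> B \<and> x \<in> rc c B)}"
  have witness: "\<exists>B. menu X B \<and> B \<subseteq> D \<and> y \<in> B \<and> x \<in> rc c B"
    if xy: "x \<in> W" "y \<in> W" for x y
  proof -
    obtain B where "menu X B" "y \<in> B" "x \<in> rc c B"
      using assms(3) xy by (auto simp: Rc_def)
    then show ?thesis using xy unfolding D_def by blast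
  qed
  obtain w where "w \<in> W" using assms(2) by blast
  then have "w \<in> D" using witness by blast
  moreover have "D \<subseteq> X" unfolding D_def by (auto simp: menu_def)
  ultimately have D: "menu X D" by (auto simp: menu_def)
  obtain r where r: "r \<in> rc c D" using rc_nonempty[OF choice D] by blast
  then have "r \<in> D" using rc_subset[of c D] by blast
  then obtain B x y where B: "menu X B" "r \<in> B" "x \<in> W" "x \<in> rc c B" "y \<in> W" "y \<in> B"
    unfolding D_def by blast
  have "B \<subseteq> D" using B unfolding D_def by blast
  then have x: "x \<in> rc c D" using rc_mono[OF B(1) D _ B(2) r] B(4) by blast
  have "k \<in> rc c D" if k: "k \<in> W" for k
  proof -
    obtain B' where B': "menu X B'" "B' \<subseteq> D" "x \<in> B'" "k \<in> rc c B'"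
      using witness[OF k B(3)] by blast
    then show ?thesis using rc_mono[OF B'(1) D B'(2,3) x] by blast
  qed
  then show ?thesis using D by blast
qed

lemma rc_subset_maxR_Rc: "menu X A \<Longrightarrow> rc c A \<subseteq> maxR A Rc"
  using Rc_intro rc_subset[of c A] by (auto simp: maxR_def)

lemma minL_Lc_rejected:
  assumes "menu X B" "x \<in> B" "x \<notin> c B" "B = c B \<union> {x}"
  shows "minL B Lc = x"
proof (rule minL_eq)
  show "antisym Lc" using Lc_antisym by (blast intro: antisymI)
  show "\<forall>y\<in>B. (y, x) \<in> Lc"
  proof
    fix y assume "y \<in> B"
    show "(y, x) \<in> Lc"
    proof (cases "y = x")
      case True
      then show ?thesis using lin_order_on_Lc assms(1,2)
        by (auto simp: lin_order_on_def weak_order_on_def preorder_on_def refl_on_def menu_def)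
    next
      case False
      then have "y \<in> c B" using \<open>y \<in> B\<close> assms(4) by blast
      then have "(x, y) \<notin> Lc" using choice_closed_Lc[OF assms(1) _ assms(2)] assms(3) by blast
      then show ?thesis using Lc_total \<open>y \<in> B\<close> assms(1,2) by (auto simp: menu_def)
    qed
  qed
qed (fact assms(2))

lemma choice_submenu_subset:
  assumes "menu X M" "menu X A" "M \<subseteq> A" "c A \<subseteq> M"
  shows "c M \<subseteq> c A"
proof (cases "M = A")
  case False
  then have "M \<subset> A" using assms(3) by blast
  obtain w where "w \<in> c A" using choice_nonempty[OF assms(2)] by blast
  then show ?thesis
    using nested_warpD[OF warp_c assms(1,2) \<open>M \<subset> A\<close>] choice_subset[OF assms(1)] assms(4)
    by blast
qed simp

lemma choice_ne_maxR_Rc: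
  assumes "menu X A" "2 \<le> card (maxR A Rc)"
  shows "c A \<noteq> maxR A Rc"
proof
  assume "c A = maxR A Rc"
  then obtain d where "d \<in> rc c A" "d \<notin> maxR A Rc"
    using rc_rejects_if_two_chosen[OF assms(1)] assms(2) by auto
  then show False using rc_subset_maxR_Rc[OF assms(1)] by blast
qed

lemma choice_eq_compromise:
  assumes A: "menu X A"
  shows "c A = (if \<exists>x. maxR A Rc = {x} then maxR A Rc
                  else maxR A Rc - {minL (maxR A Rc) Lc})"
proof -
  let ?M = "maxR A Rc"
  have cM: "c A \<subseteq> ?M"
    using choice_subset_rc[OF choice A] rc_subset_maxR_Rc[OF A] by blast
  show ?thesis
  proof (cases "\<exists>x. ?M = {x}")
    case True
    then show ?thesis using cM choice_nonempty[OF A] by auto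
  next
    case False
    have M: "menu X ?M" "finite ?M"
      using cM choice_nonempty[OF A] A maxR_subset[of A Rc] menu_finite[OF finite_X A]
      by (auto simp: menu_def intro: finite_subset)
    obtain x0 where "x0 \<in> ?M" using M(1) by (auto simp: menu_def)
    moreover obtain y0 where "y0 \<in> ?M" "y0 \<noteq> x0" using False calculation by blast
    ultimately have two: "2 \<le> card ?M" using two_le_card[OF M(2)] by blast
    have "\<forall>x\<in>?M. \<forall>y\<in>?M. (x, y) \<in> Rc" by (auto simp: maxR_def)
    moreover have "?M \<subseteq> X" "?M \<noteq> {}" using M(1) by (simp_all add: menu_def)
    ultimately obtain D where "menu X D" "?M \<subseteq> rc c D"
      using menu_covering_rc by blast
    then obtain x where x: "x \<in> ?M" "x \<notin> c ?M" "?M = c ?M \<union> {x}"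
      using rejects_one_within_rcD[OF rejects_one _ M(1) _ two] by blast
    have "c ?M \<subseteq> c A"
      using choice_submenu_subset[OF M(1) A maxR_subset cM] .
    moreover have "x \<notin> c A"
      using choice_ne_maxR_Rc[OF A two] cM calculation x(3) by blast
    ultimately have "c A = ?M - {x}" using cM x(3) by blast
    then show ?thesis using False minL_Lc_rejected[OF M(1) x] by simp
  qed
qed

end

lemma conditions_min_compromise_rep:
  assumes "finite X" "choice_corr X c" "nested_warp X c" "nested_warp X (rc c)"
    "rejects_some X c" "rejects_one_within_rc X c"
  shows "min_compromise_rep X c"
proof -
  interpret compromise_conditions X c
    using assms by unfold_locales
  show ?thesis
    unfolding min_compromise_rep_def
    using weak_order_on_Rc lin_order_on_Lc choice_eq_compromise by blast
qed

theorem theorem1: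
  fixes X :: "'a set" and c :: "'a set \<Rightarrow> 'a set"
  assumes "finite X" and "choice_corr X c"
  shows "min_compromise_rep X c \<longleftrightarrow>
    ((\<forall>x y A B. menu X A \<and> menu X B \<and> A \<subset> B \<and> x \<in> A \<and> y \<in> A
        \<and> x \<in> c A \<and> y \<in> c B \<longrightarrow> x \<in> c B)
   \<and> (\<forall>x y A B. menu X A \<and> menu X B \<and> A \<subset> B \<and> x \<in> A \<and> y \<in> A
        \<and> x \<in> rc c A \<and> y \<in> rc c B \<longrightarrow> x \<in> rc c B)
   \<and> (\<forall>A. menu X A \<and> card A \<ge> 2 \<longrightarrow> (\<exists>x \<in> A. x \<notin> c A))
   \<and> (\<forall>A x y. menu X A \<and> x \<in> X \<and> y \<in> X \<and> x \<in> A - c A \<and> x \<in> c (A \<union> {y})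
        \<longrightarrow> y \<notin> c (A \<union> {y}))
   \<and> (\<forall>A B. menu X A \<and> menu X B \<and> B \<subseteq> rc c A \<and> card B \<ge> 2
        \<longrightarrow> (\<exists>x \<in> B. x \<notin> c B \<and> B = c B \<union> {x})))"
proof -
  have "min_compromise_rep X c \<longleftrightarrow> nested_warp X c \<and> nested_warp X (rc c)
    \<and> rejects_some X c \<and> promoter_not_chosen X c \<and> rejects_one_within_rc X c"
    using min_compromise_rep_conditions[OF assms] conditions_min_compromise_rep[OF assms]
    by blast
  then show ?thesis
    unfolding nested_warp_def rejects_some_def promoter_not_chosen_def rejects_one_within_rc_def .
qed

end
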